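(* There is an absolute constant $C>0$ such that for every prime $p$ there exists a Latin trade $T$ in $B_p$ with $|T|\le C\log p$ such that every symbol of $\mathbb{Z}_p$ occurs in $T$ either exactly twice or not at all.
   Context: A Latin square of order $p$ is viewed as a set of (row, column, symbol) triples in $\mathbb{Z}_p^3$. $B_p$ is the addition table of $\mathbb{Z}_p$: the Latin square with symbol $i+j \pmod p$ in cell $(i,j)$, $i,j\in\mathbb{Z}_p$. A Latin trade in a Latin square $L$ is a subset $T\subseteq L$ for which there is a partial Latin square $T'$ (a disjoint mate) such that $T$ and $T'$ occupy the same set of cells, $T\cap T'=\emptyset$, and each row (respectively column) of $T$ contains the same set of symbols as the corresponding row (column) of $T'$. $|T|$ is the number of triples in $T$. *)

theory Defs
  imports "HOL-Computational_Algebra.Primes" Complex_Main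
begin

text \<open>Latin squares of order p as sets of (row, column, symbol) triples over
  Z_p, represented by natural numbers in {0..<p}.\<close>

definition addtab :: "nat \<Rightarrow> (nat \<times> nat \<times> nat) set" where
  "addtab p = {(i, j, (i + j) mod p) | i j. i < p \<and> j < p}"

definition partial_latin_square :: "nat \<Rightarrow> (nat \<times> nat \<times> nat) set \<Rightarrow> bool" where
  "partial_latin_square p P \<longleftrightarrow>
     P \<subseteq> {0..<p} \<times> {0..<p} \<times> {0..<p} \<and>
     (\<forall>r c s s'. (r, c, s) \<in> P \<and> (r, c, s') \<in> P \<longrightarrow> s = s') \<and>
     (\<forall>r c c' s. (r, c, s) \<in> P \<and> (r, c', s) \<in> P \<longrightarrow> c = c') \<and>
     (\<forall>r r' c s. (r, c, s) \<in> P \<and> (r', c, s) \<in> P \<longrightarrow> r = r')"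

definition cells :: "(nat \<times> nat \<times> nat) set \<Rightarrow> (nat \<times> nat) set" where
  "cells P = {(r, c). \<exists>s. (r, c, s) \<in> P}"

definition row_syms :: "(nat \<times> nat \<times> nat) set \<Rightarrow> nat \<Rightarrow> nat set" where
  "row_syms P r = {s. \<exists>c. (r, c, s) \<in> P}"

definition col_syms :: "(nat \<times> nat \<times> nat) set \<Rightarrow> nat \<Rightarrow> nat set" where
  "col_syms P c = {s. \<exists>r. (r, c, s) \<in> P}"

definition latin_trade :: "nat \<Rightarrow> (nat \<times> nat \<times> nat) set \<Rightarrow> (nat \<times> nat \<times> nat) set \<Rightarrow> bool" where
  "latin_trade p L T \<longleftrightarrow>
     T \<noteq> {} \<and> T \<subseteq> L \<and>
     (\<exists>T'. partial_latin_square p T' \<and> cells T' = cells T \<and> T \<inter> T' = {} \<and>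
           (\<forall>r. row_syms T' r = row_syms T r) \<and> (\<forall>c. col_syms T' c = col_syms T c))"

definition sym_count :: "(nat \<times> nat \<times> nat) set \<Rightarrow> nat \<Rightarrow> nat" where
  "sym_count T s = card {(r, c). (r, c, s) \<in> T}"

end

theory Submission
  imports Defs
begin

text \<open>A square \<open>[x, x + s] \<times> [y, y + s]\<close> with \<open>p \<nmid> s\<close> gives, modulo \<open>p\<close>, the two entries of
  \<open>B\<^sub>p\<close> at its anti-diagonal corners \<open>(x, y + s)\<close>, \<open>(x + s, y)\<close>, both with symbol \<open>x + y + s\<close>.
  Moving this symbol to the main-diagonal corners \<open>(x, y)\<close>, \<open>(x + s, y + s)\<close> keeps the symbols
  of every row and column. If the squares tile a rectangle whose height is divisible by \<open>p\<close>,
  every point of the torus \<open>\<int>\<^sub>p\<^sup>2\<close> is a main corner as often as an anti corner, so the moved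
  entries fill exactly the vacated cells; if moreover distinct squares have distinct symbols
  modulo \<open>p\<close>, this is a Latin trade with twice as many entries as squares in which every symbol
  occurs twice or not at all.

  It remains to tile a \<open>w \<times> p\<close> rectangle by \<open>O(log p)\<close> such squares. Write
  \<open>p = (a + 4) 4\<^sup>k + E + 4\<close> with \<open>8 \<le> a < 44\<close> and \<open>E < 4\<^sup>k\<close> odd. Start from an
  \<open>a 2\<^sup>k \<times> (a + 8) 2\<^sup>k\<close> rectangle tiled by at most \<open>a + 9\<close> squares. A pinwheel step puts three squares
  around the current \<open>w \<times> (w + 16m)\<close> rectangle and tiles the remaining hole by at most eight
  squares, giving a \<open>W \<times> (W + 8m)\<close> rectangle with \<open>W = 2w + (12 + d) m\<close>, where \<open>d\<close> is the next
  base-4 digit of \<open>E\<close>; with \<open>m\<close> halving at every step the height ends up being exactly \<open>p\<close>.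
  All symbols stay below the current width, except those of the last two outer squares, which
  become \<open>0\<close> and some \<open>c\<close> modulo \<open>p\<close>; a parity argument using that \<open>E\<close> is odd keeps \<open>c\<close> free.\<close>

section \<open>Latin trades from squares\<close>

text \<open>\<open>(x, y, s)\<close> is the square \<open>[x, x + s] \<times> [y, y + s]\<close>; a boolean selects one of the two
  corners on each of its diagonals.\<close>

type_synonym square = "nat \<times> nat \<times> nat"

fun square_symbol :: "square \<Rightarrow> nat" where
  "square_symbol (x, y, s) = x + y + s"

fun square_side :: "square \<Rightarrow> nat" where
  "square_side (x, y, s) = s"

fun main_corner :: "square \<times> bool \<Rightarrow> nat \<times> nat" where
  "main_corner ((x, y, s), b) = (if b then (x + s, y + s) else (x, y))"

fun anti_corner :: "square \<times> bool \<Rightarrow> nat \<times> nat" where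
  "anti_corner ((x, y, s), b) = (if b then (x + s, y) else (x, y + s))"

definition corner_tokens :: "square list \<Rightarrow> (square \<times> bool) list" where
  "corner_tokens L = concat (map (\<lambda>q. [(q, False), (q, True)]) L)"

definition main_corners :: "square list \<Rightarrow> (nat \<times> nat) multiset" where
  "main_corners L = mset (map main_corner (corner_tokens L))"

definition anti_corners :: "square list \<Rightarrow> (nat \<times> nat) multiset" where
  "anti_corners L = mset (map anti_corner (corner_tokens L))"

definition pair_mod :: "nat \<Rightarrow> nat \<times> nat \<Rightarrow> nat \<times> nat" where
  "pair_mod p z = (fst z mod p, snd z mod p)"

lemma pair_mod_Pair [simp]: "pair_mod p (a, b) = (a mod p, b mod p)"
  by (simp add: pair_mod_def)

lemma set_corner_tokens: "set (corner_tokens L) = set L \<times> UNIV"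
  by (auto simp: corner_tokens_def)

lemma distinct_corner_tokens: "distinct L \<Longrightarrow> distinct (corner_tokens L)"
  by (induction L) (auto simp: corner_tokens_def)

lemma length_corner_tokens: "length (corner_tokens L) = 2 * length L"
  by (induction L) (auto simp: corner_tokens_def)

lemma fst_main_corner: "fst (main_corner t) = fst (anti_corner t)"
  by (cases t) auto

lemma snd_main_corner: "snd (main_corner (q, b)) = snd (anti_corner (q, \<not> b))"
  by (cases q) auto

lemma anti_corner_sum: "fst (anti_corner t) + snd (anti_corner t) = square_symbol (fst t)"
  by (cases t) auto

lemma mod_add_neq_if_not_dvd:
  fixes x s p :: nat
  shows "s mod p \<noteq> 0 \<Longrightarrow> x mod p \<noteq> (x + s) mod p"
  using mod_eq_dvd_iff_nat[of x "x + s" p] by auto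

lemma corners_differ_mod:
  assumes "square_side q mod p \<noteq> 0" and "b \<noteq> b'"
  shows "fst (main_corner (q, b)) mod p \<noteq> fst (main_corner (q, b')) mod p"
    and "snd (main_corner (q, b)) mod p \<noteq> snd (main_corner (q, b')) mod p"
    and "pair_mod p (anti_corner (q, b)) \<noteq> pair_mod p (anti_corner (q, b'))"
proof -
  obtain x y s where q: "q = (x, y, s)" by (cases q)
  have "x mod p \<noteq> (x + s) mod p" "y mod p \<noteq> (y + s) mod p"
    using assms(1) by (simp_all add: q mod_add_neq_if_not_dvd)
  then show "fst (main_corner (q, b)) mod p \<noteq> fst (main_corner (q, b')) mod p"
    and "snd (main_corner (q, b)) mod p \<noteq> snd (main_corner (q, b')) mod p"
    and "pair_mod p (anti_corner (q, b)) \<noteq> pair_mod p (anti_corner (q, b'))"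
    using assms(2) by (cases b; cases b'; simp add: q eq_commute)+
qed

lemma anti_main_corner_differ_mod:
  assumes "square_side q mod p \<noteq> 0"
  shows "pair_mod p (anti_corner (q, b)) \<noteq> pair_mod p (main_corner (q, b'))"
proof -
  obtain x y s where q: "q = (x, y, s)" by (cases q)
  have "x mod p \<noteq> (x + s) mod p" "y mod p \<noteq> (y + s) mod p"
    using assms by (simp_all add: q mod_add_neq_if_not_dvd)
  then show ?thesis by (cases b; cases b'; simp add: q eq_commute)
qed

definition corner_entry ::
    "nat \<Rightarrow> (square \<times> bool \<Rightarrow> nat \<times> nat) \<Rightarrow> square \<times> bool \<Rightarrow> nat \<times> nat \<times> nat" where
  "corner_entry p f t =
     (fst (pair_mod p (f t)), snd (pair_mod p (f t)), square_symbol (fst t) mod p)"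

definition squares_trade :: "nat \<Rightarrow> square list \<Rightarrow> (nat \<times> nat \<times> nat) set" where
  "squares_trade p L = corner_entry p anti_corner ` set (corner_tokens L)"

definition squares_mate :: "nat \<Rightarrow> square list \<Rightarrow> (nat \<times> nat \<times> nat) set" where
  "squares_mate p L = corner_entry p main_corner ` set (corner_tokens L)"

locale square_trade =
  fixes p :: nat and L :: "square list"
  assumes p_gt_1: "1 < p"
    and L_not_Nil: "L \<noteq> []"
    and distinct_symbols: "distinct (map (\<lambda>q. square_symbol q mod p) L)"
    and sides_mod_nonzero: "\<forall>q\<in>set L. square_side q mod p \<noteq> 0"
    and corners_balanced:
      "image_mset (pair_mod p) (main_corners L) = image_mset (pair_mod p) (anti_corners L)"
begin

abbreviation tokens :: "(square \<times> bool) set" where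
  "tokens \<equiv> set (corner_tokens L)"

lemma same_square_if_same_symbol:
  assumes "t \<in> tokens" "t' \<in> tokens" "square_symbol (fst t) mod p = square_symbol (fst t') mod p"
  shows "fst t = fst t'"
  using assms distinct_symbols by (auto simp: set_corner_tokens distinct_map dest: inj_onD)

lemma token_side_mod_nonzero: "t \<in> tokens \<Longrightarrow> square_side (fst t) mod p \<noteq> 0"
  using sides_mod_nonzero by (auto simp: set_corner_tokens)

lemma symbol_eq_corner_sum:
  "square_symbol (fst t) mod p = (fst (pair_mod p (anti_corner t)) + snd (pair_mod p (anti_corner t))) mod p"
  by (simp add: pair_mod_def anti_corner_sum[symmetric] mod_add_eq)

lemma inj_on_anti_corner: "inj_on (pair_mod p \<circ> anti_corner) tokens"
proof (rule inj_onI)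
  fix t t' assume t: "t \<in> tokens" "t' \<in> tokens"
    and eq: "(pair_mod p \<circ> anti_corner) t = (pair_mod p \<circ> anti_corner) t'"
  obtain q b b' where tt: "t = (q, b)" "t' = (q, b')"
    using same_square_if_same_symbol[OF t] eq symbol_eq_corner_sum[of t] symbol_eq_corner_sum[of t']
    by (cases t; cases t') auto
  have "b = b'"
    using corners_differ_mod(3)[OF token_side_mod_nonzero[OF t(1)], of b b'] eq
    by (cases b; cases b') (auto simp: tt)
  then show "t = t'" by (simp add: tt)
qed

lemma main_anti_corners_mod:
  "mset (map (pair_mod p \<circ> main_corner) (corner_tokens L)) =
   mset (map (pair_mod p \<circ> anti_corner) (corner_tokens L))"
  using corners_balanced by (simp add: main_corners_def anti_corners_def multiset.map_comp)

lemma inj_on_main_corner: "inj_on (pair_mod p \<circ> main_corner) tokens"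
proof -
  have "distinct (corner_tokens L)"
    using distinct_symbols by (intro distinct_corner_tokens) (simp add: distinct_map)
  then have "distinct (map (pair_mod p \<circ> anti_corner) (corner_tokens L))"
    using inj_on_anti_corner by (simp add: distinct_map)
  then have "distinct (map (pair_mod p \<circ> main_corner) (corner_tokens L))"
    using mset_eq_imp_distinct_iff[OF main_anti_corners_mod] by simp
  then show ?thesis by (simp add: distinct_map)
qed

lemma corner_entry_eq_iff:
  "corner_entry p f t = corner_entry p f' t' \<longleftrightarrow>
     pair_mod p (f t) = pair_mod p (f' t') \<and> square_symbol (fst t) mod p = square_symbol (fst t') mod p"
  by (simp add: corner_entry_def prod_eq_iff)

lemma squares_trade_subset_addtab: "squares_trade p L \<subseteq> addtab p"
proof
  fix e assume "e \<in> squares_trade p L"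
  then obtain t where "e = corner_entry p anti_corner t"
    unfolding squares_trade_def by blast
  then show "e \<in> addtab p"
    using p_gt_1 symbol_eq_corner_sum[of t] by (auto simp: addtab_def corner_entry_def pair_mod_def)
qed

lemma cells_corner_entries: "cells (corner_entry p f ` tokens) = pair_mod p ` f ` tokens"
  by (force simp: cells_def corner_entry_def pair_mod_def image_iff)

lemma cells_mate_eq: "cells (squares_mate p L) = cells (squares_trade p L)"
proof -
  have "(pair_mod p \<circ> main_corner) ` tokens = (pair_mod p \<circ> anti_corner) ` tokens"
    using arg_cong[OF main_anti_corners_mod, of set_mset] by simp
  then show ?thesis
    by (simp add: squares_mate_def squares_trade_def cells_corner_entries image_comp)
qed

lemma partial_latin_square_mate: "partial_latin_square p (squares_mate p L)"
  unfolding partial_latin_square_def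
proof (intro conjI allI impI)
  show "squares_mate p L \<subseteq> {0..<p} \<times> {0..<p} \<times> {0..<p}"
    using p_gt_1 by (auto simp: squares_mate_def corner_entry_def pair_mod_def)
next
  fix r c s s' assume "(r, c, s) \<in> squares_mate p L \<and> (r, c, s') \<in> squares_mate p L"
  then obtain t t' where t: "t \<in> tokens" "t' \<in> tokens"
    and e: "(r, c, s) = corner_entry p main_corner t" "(r, c, s') = corner_entry p main_corner t'"
    unfolding squares_mate_def by blast
  have "(pair_mod p \<circ> main_corner) t = (pair_mod p \<circ> main_corner) t'"
    using e by (simp add: corner_entry_def prod_eq_iff)
  then have "t = t'"
    using inj_onD[OF inj_on_main_corner] t by blast
  then show "s = s'" using e by (metis prod.inject)
next
  fix r c c' s assume "(r, c, s) \<in> squares_mate p L \<and> (r, c', s) \<in> squares_mate p L"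
  then obtain q b q' b' where t: "(q, b) \<in> tokens" "(q', b') \<in> tokens"
    and e: "(r, c, s) = corner_entry p main_corner (q, b)" "(r, c', s) = corner_entry p main_corner (q', b')"
    unfolding squares_mate_def by auto
  have "q = q'"
    using same_square_if_same_symbol[OF t] e by (simp add: corner_entry_def)
  moreover have "b = b'"
    using corners_differ_mod(1)[OF token_side_mod_nonzero[OF t(1)], of b b'] e \<open>q = q'\<close>
    by (cases b; cases b') (auto simp: corner_entry_def pair_mod_def)
  ultimately show "c = c'" using e by (auto simp: corner_entry_def)
next
  fix r r' c s assume "(r, c, s) \<in> squares_mate p L \<and> (r', c, s) \<in> squares_mate p L"
  then obtain q b q' b' where t: "(q, b) \<in> tokens" "(q', b') \<in> tokens"
    and e: "(r, c, s) = corner_entry p main_corner (q, b)" "(r', c, s) = corner_entry p main_corner (q', b')"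
    unfolding squares_mate_def by auto
  have "q = q'"
    using same_square_if_same_symbol[OF t] e by (simp add: corner_entry_def)
  moreover have "b = b'"
    using corners_differ_mod(2)[OF token_side_mod_nonzero[OF t(1)], of b b'] e \<open>q = q'\<close>
    by (cases b; cases b') (auto simp: corner_entry_def pair_mod_def)
  ultimately show "r = r'" using e by (auto simp: corner_entry_def)
qed

lemma trade_mate_disjoint: "squares_trade p L \<inter> squares_mate p L = {}"
proof (rule ccontr)
  assume "squares_trade p L \<inter> squares_mate p L \<noteq> {}"
  then obtain t t' where t: "t \<in> tokens" "t' \<in> tokens"
    and e: "corner_entry p anti_corner t = corner_entry p main_corner t'"
    unfolding squares_trade_def squares_mate_def by blast
  obtain q b q' b' where tt: "t = (q, b)" "t' = (q', b')" by (cases t; cases t')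
  have "q = q'"
    using same_square_if_same_symbol[OF t] e by (simp add: tt corner_entry_eq_iff)
  then show False
    using anti_main_corner_differ_mod[OF token_side_mod_nonzero[OF t(1)]] e
    by (simp add: tt corner_entry_eq_iff)
qed

lemma row_syms_mate: "row_syms (squares_mate p L) r = row_syms (squares_trade p L) r"
  by (auto simp: row_syms_def squares_mate_def squares_trade_def corner_entry_def
      pair_mod_def fst_main_corner image_iff)

lemma col_syms_corner_entries:
  "col_syms (corner_entry p f ` A) c = (\<lambda>t. square_symbol (fst t) mod p) ` {t \<in> A. snd (f t) mod p = c}"
  by (auto simp: col_syms_def corner_entry_def pair_mod_def)

text \<open>In a column, the symbol of a square moves to the other token of the same square.\<close>

lemma col_syms_mate: "col_syms (squares_mate p L) c = col_syms (squares_trade p L) c"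
proof -
  define flip :: "square \<times> bool \<Rightarrow> square \<times> bool" where "flip t = (fst t, \<not> snd t)" for t
  have flip_flip: "flip (flip t) = t" for t
    by (simp add: flip_def)
  have flip_mem: "flip t \<in> tokens \<longleftrightarrow> t \<in> tokens" for t
    by (cases t) (simp add: flip_def set_corner_tokens)
  have snd_main: "snd (main_corner t) = snd (anti_corner (flip t))" for t
    using snd_main_corner[of "fst t" "snd t"] by (simp add: flip_def)
  have "{t \<in> tokens. snd (main_corner t) mod p = c} = flip ` {t \<in> tokens. snd (anti_corner t) mod p = c}"
  proof (rule set_eqI, rule iffI)
    fix t assume "t \<in> {t \<in> tokens. snd (main_corner t) mod p = c}"
    then have "flip t \<in> {t \<in> tokens. snd (anti_corner t) mod p = c}"
      by (simp only: mem_Collect_eq flip_mem snd_main)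
    then show "t \<in> flip ` {t \<in> tokens. snd (anti_corner t) mod p = c}"
      by (rule image_eqI[rotated]) (simp only: flip_flip)
  next
    fix t assume "t \<in> flip ` {t \<in> tokens. snd (anti_corner t) mod p = c}"
    then obtain u where "u \<in> tokens" "snd (anti_corner u) mod p = c" "t = flip u"
      by blast
    then show "t \<in> {t \<in> tokens. snd (main_corner t) mod p = c}"
      by (simp only: mem_Collect_eq flip_mem snd_main flip_flip)
  qed
  moreover have "square_symbol (fst (flip t)) = square_symbol (fst t)" for t
    by (simp add: flip_def)
  ultimately show ?thesis
    by (simp add: squares_mate_def squares_trade_def col_syms_corner_entries image_comp comp_def)
qed

lemma latin_trade_squares_trade: "latin_trade p (addtab p) (squares_trade p L)"
  unfolding latin_trade_def
proof (intro conjI exI[of _ "squares_mate p L"])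
  show "squares_trade p L \<noteq> {}"
    using L_not_Nil by (simp add: squares_trade_def set_corner_tokens)
qed (use squares_trade_subset_addtab partial_latin_square_mate cells_mate_eq
      trade_mate_disjoint row_syms_mate col_syms_mate in auto)

lemma card_squares_trade: "card (squares_trade p L) = 2 * length L"
proof -
  have "inj_on (corner_entry p anti_corner) tokens"
    using inj_on_anti_corner by (auto simp: inj_on_def corner_entry_eq_iff)
  moreover have "distinct (corner_tokens L)"
    using distinct_symbols by (intro distinct_corner_tokens) (simp add: distinct_map)
  ultimately show ?thesis
    by (simp add: squares_trade_def card_image distinct_card length_corner_tokens)
qed

lemma sym_count_squares_trade:
  "sym_count (squares_trade p L) s = 2 \<or> sym_count (squares_trade p L) s = 0"
proof -
  let ?S = "{t \<in> tokens. square_symbol (fst t) mod p = s}"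
  have "{(r, c). (r, c, s) \<in> squares_trade p L} = (pair_mod p \<circ> anti_corner) ` ?S"
    by (force simp: squares_trade_def corner_entry_def pair_mod_def image_iff)
  then have count: "sym_count (squares_trade p L) s = card ?S"
    using card_image[OF inj_on_subset[OF inj_on_anti_corner]] by (simp add: sym_count_def)
  show ?thesis
  proof (cases "\<exists>q\<in>set L. square_symbol q mod p = s")
    case True
    then obtain q where q: "q \<in> set L" "square_symbol q mod p = s" by blast
    have q_tokens: "(q, b) \<in> ?S" for b
      using q by (simp add: set_corner_tokens)
    have "?S = {(q, False), (q, True)}"
    proof (intro equalityI subsetI)
      fix t assume "t \<in> ?S"
      then have "fst t = q"
        using same_square_if_same_symbol[of t "(q, False)"] q_tokens[of False] by simp
      then show "t \<in> {(q, False), (q, True)}" by (cases t) auto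
    qed (use q_tokens in blast)
    then show ?thesis using count by simp
  next
    case False
    then have "?S = {}" by (simp add: set_corner_tokens)
    then show ?thesis using count by simp
  qed
qed

end

section \<open>Corner-balanced families of squares\<close>

lemma main_corners_append [simp]: "main_corners (L @ L') = main_corners L + main_corners L'"
  by (simp add: main_corners_def corner_tokens_def)

lemma anti_corners_append [simp]: "anti_corners (L @ L') = anti_corners L + anti_corners L'"
  by (simp add: anti_corners_def corner_tokens_def)

lemma main_corners_Nil [simp]: "main_corners [] = {#}"
  by (simp add: main_corners_def corner_tokens_def)

lemma anti_corners_Nil [simp]: "anti_corners [] = {#}"
  by (simp add: anti_corners_def corner_tokens_def)

text \<open>This holds when \<open>L\<close> tiles the rectangle \<open>[x0, x1] \<times> [y0, y1]\<close>: every point other than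
  the corners of the rectangle is a main corner and an anti corner of equally many squares.\<close>

definition corner_balanced :: "square list \<Rightarrow> nat \<Rightarrow> nat \<Rightarrow> nat \<Rightarrow> nat \<Rightarrow> bool" where
  "corner_balanced L x0 y0 x1 y1 \<longleftrightarrow>
     main_corners L + {#(x0, y1), (x1, y0)#} = anti_corners L + {#(x0, y0), (x1, y1)#}"

lemma corner_balanced_square: "corner_balanced [(x, y, s)] x y (x + s) (y + s)"
  by (simp add: corner_balanced_def main_corners_def anti_corners_def corner_tokens_def add_mset_commute)

lemma corner_balanced_Nil_width: "corner_balanced [] x y x y'"
  by (simp add: corner_balanced_def add_mset_commute)

lemma corner_balanced_Nil_height: "corner_balanced [] x y x' y"
  by (simp add: corner_balanced_def add_mset_commute)

lemma add_eq_add_combine: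
  fixes A B X Y A' B' X' Y' :: "'a::comm_monoid_add"
  assumes "A + X = B + Y" "A' + X' = B' + Y'"
  shows "(A + A') + (X + X') = (B + B') + (Y + Y')"
proof -
  have "(A + A') + (X + X') = (A + X) + (A' + X')"
    by (simp add: ac_simps)
  also have "\<dots> = (B + B') + (Y + Y')"
    using assms by (simp add: ac_simps)
  finally show ?thesis .
qed

lemma add_eq_add_cancel:
  fixes A B X Y Z W C :: "'a::cancel_comm_monoid_add"
  assumes "A + X = B + Y" "X = Z + C" "Y = W + C"
  shows "A + Z = B + W"
  using assms by (metis add.assoc add_right_cancel)

lemma corner_balanced_append_right:
  assumes "corner_balanced L x0 y0 x1 y1" "corner_balanced L' x1 y0 x2 y1"
  shows "corner_balanced (L @ L') x0 y0 x2 y1"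
  unfolding corner_balanced_def main_corners_append anti_corners_append
  by (rule add_eq_add_cancel[OF add_eq_add_combine[OF assms[unfolded corner_balanced_def]],
        where C = "{#(x1, y0), (x1, y1)#}"]) (simp_all add: add_mset_commute)

lemma corner_balanced_append_top:
  assumes "corner_balanced L x0 y0 x1 y1" "corner_balanced L' x0 y1 x1 y2"
  shows "corner_balanced (L @ L') x0 y0 x1 y2"
  unfolding corner_balanced_def main_corners_append anti_corners_append
  by (rule add_eq_add_cancel[OF add_eq_add_combine[OF assms[unfolded corner_balanced_def]],
        where C = "{#(x0, y1), (x1, y1)#}"]) (simp_all add: add_mset_commute)

lemma corner_balanced_pinwheel:
  assumes "corner_balanced N 0 0 w h" "corner_balanced B w 0 W b"
    "corner_balanced D 0 h d H" "corner_balanced C d b W H" "corner_balanced M w b d h"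
  shows "corner_balanced (N @ B @ D @ C @ M) 0 0 W H"
  unfolding corner_balanced_def main_corners_append anti_corners_append
  by (rule add_eq_add_cancel[OF add_eq_add_combine[OF assms(1)[unfolded corner_balanced_def]
        add_eq_add_combine[OF assms(2)[unfolded corner_balanced_def]
        add_eq_add_combine[OF assms(3)[unfolded corner_balanced_def]
        add_eq_add_combine[OF assms(4,5)[unfolded corner_balanced_def]]]]],
        where C = "{#(w, 0), (0, h), (w, h), (w, b), (d, h), (d, b), (d, H), (W, b)#}"])
    (simp_all add: add_mset_commute)

lemma corner_balanced_mod:
  assumes "corner_balanced L 0 0 w h" and "w mod p = 0 \<or> h mod p = 0"
  shows "image_mset (pair_mod p) (main_corners L) = image_mset (pair_mod p) (anti_corners L)"
proof -
  have "image_mset (pair_mod p) (main_corners L) + {#pair_mod p (0, h), pair_mod p (w, 0)#} =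
        image_mset (pair_mod p) (anti_corners L) + {#pair_mod p (0, 0), pair_mod p (w, h)#}"
    using arg_cong[OF assms(1)[unfolded corner_balanced_def], of "image_mset (pair_mod p)"]
    by (simp only: image_mset_union image_mset_add_mset image_mset_empty)
  moreover have "{#pair_mod p (0, h), pair_mod p (w, 0)#} = {#pair_mod p (0, 0), pair_mod p (w, h)#}"
    using assms(2) by (auto simp: add_mset_commute)
  ultimately show ?thesis
    by (simp only: add_right_cancel)
qed

function euclid_tiling :: "nat \<Rightarrow> nat \<Rightarrow> nat \<Rightarrow> nat \<Rightarrow> square list" where
  "euclid_tiling x y W H =
    (if W = 0 \<or> H = 0 then []
     else if H \<le> W then (x, y, H) # euclid_tiling (x + H) y (W - H) H
     else (x, y, W) # euclid_tiling x (y + W) W (H - W))"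
  by pat_completeness auto
termination by (relation "measure (\<lambda>(x, y, W, H). W + H)") auto

declare euclid_tiling.simps [simp del]

lemma euclid_tiling_zero: "W = 0 \<or> H = 0 \<Longrightarrow> euclid_tiling x y W H = []"
  by (simp add: euclid_tiling.simps)

lemma euclid_tiling_wide:
  "0 < H \<Longrightarrow> H \<le> W \<Longrightarrow> euclid_tiling x y W H = (x, y, H) # euclid_tiling (x + H) y (W - H) H"
  by (subst euclid_tiling.simps) simp

lemma euclid_tiling_tall:
  "0 < W \<Longrightarrow> W < H \<Longrightarrow> euclid_tiling x y W H = (x, y, W) # euclid_tiling x (y + W) W (H - W)"
  by (subst euclid_tiling.simps) simp

lemma corner_balanced_euclid_tiling: "corner_balanced (euclid_tiling x y W H) x y (x + W) (y + H)"
proof (induction x y W H rule: euclid_tiling.induct)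
  case (1 x y W H)
  consider "W = 0 \<or> H = 0" | "0 < H" "H \<le> W" | "0 < W" "W < H"
    by linarith
  then show ?case
  proof cases
    case 1
    then show ?thesis
      using corner_balanced_Nil_width corner_balanced_Nil_height by (auto simp: euclid_tiling_zero)
  next
    case 2
    then show ?thesis
      using corner_balanced_append_right[OF corner_balanced_square "1.IH"(1)]
      by (simp add: euclid_tiling_wide)
  next
    case 3
    then show ?thesis
      using corner_balanced_append_top[OF corner_balanced_square "1.IH"(2)]
      by (simp add: euclid_tiling_tall)
  qed
qed

lemma euclid_tiling_square_bounds:
  "q \<in> set (euclid_tiling x y W H) \<Longrightarrow>
     x + y < square_symbol q \<and> square_symbol q < x + y + W + H \<and>
     0 < square_side q \<and> square_side q \<le> W \<and> square_side q \<le> H"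
proof (induction x y W H rule: euclid_tiling.induct)
  case (1 x y W H)
  consider "W = 0 \<or> H = 0" | "0 < H" "H \<le> W" | "0 < W" "W < H"
    by linarith
  then show ?case
  proof cases
    case 1
    then show ?thesis using "1.prems" by (simp add: euclid_tiling_zero)
  next
    case 2
    then show ?thesis using "1.prems" "1.IH"(1) by (auto simp: euclid_tiling_wide)
  next
    case 3
    then show ?thesis using "1.prems" "1.IH"(2) by (auto simp: euclid_tiling_tall)
  qed
qed

lemma distinct_euclid_tiling_symbols: "distinct (map square_symbol (euclid_tiling x y W H))"
proof (induction x y W H rule: euclid_tiling.induct)
  case (1 x y W H)
  consider "W = 0 \<or> H = 0" | "0 < H" "H \<le> W" | "0 < W" "W < H"
    by linarith
  then show ?case
  proof cases
    case 1
    then show ?thesis by (simp add: euclid_tiling_zero)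
  next
    case 2
    have "x + y + H \<notin> square_symbol ` set (euclid_tiling (x + H) y (W - H) H)"
      using euclid_tiling_square_bounds[of _ "x + H" y "W - H" H] by fastforce
    then show ?thesis using "1.IH"(1) 2 by (simp add: euclid_tiling_wide)
  next
    case 3
    have "x + y + W \<notin> square_symbol ` set (euclid_tiling x (y + W) W (H - W))"
      using euclid_tiling_square_bounds[of _ x "y + W" W "H - W"] by fastforce
    then show ?thesis using "1.IH"(2) 3 by (simp add: euclid_tiling_tall)
  qed
qed

lemma euclid_tiling_symbol_mod:
  "g dvd W \<Longrightarrow> g dvd H \<Longrightarrow> q \<in> set (euclid_tiling x y W H) \<Longrightarrow>
    square_symbol q mod g = (x + y) mod g"
proof (induction x y W H rule: euclid_tiling.induct)
  case (1 x y W H)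
  consider "W = 0 \<or> H = 0" | "0 < H" "H \<le> W" | "0 < W" "W < H"
    by linarith
  then show ?case
  proof cases
    case 1
    then show ?thesis using "1.prems" by (simp add: euclid_tiling_zero)
  next
    case 2
    have shift: "(a + H) mod g = a mod g" for a
      using "1.prems"(2) by (auto elim: dvdE)
    show ?thesis
      using "1.prems" "1.IH"(1) 2 shift[of "x + y"] by (auto simp: euclid_tiling_wide ac_simps)
  next
    case 3
    have shift: "(a + W) mod g = a mod g" for a
      using "1.prems"(1) by (auto elim: dvdE)
    show ?thesis
      using "1.prems" "1.IH"(2) 3 shift[of "x + y"] by (auto simp: euclid_tiling_tall ac_simps)
  qed
qed

lemma length_euclid_tiling:
  "0 < g \<Longrightarrow> g dvd W \<Longrightarrow> g dvd H \<Longrightarrow> length (euclid_tiling x y W H) * g \<le> W + H"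
proof (induction x y W H rule: euclid_tiling.induct)
  case (1 x y W H)
  consider "W = 0 \<or> H = 0" | "0 < H" "H \<le> W" | "0 < W" "W < H"
    by linarith
  then show ?case
  proof cases
    case 1
    then show ?thesis by (simp add: euclid_tiling_zero)
  next
    case 2
    then have "g \<le> H" using "1.prems" by (simp add: dvd_imp_le)
    moreover have "length (euclid_tiling (x + H) y (W - H) H) * g \<le> W - H + H"
      using "1.IH"(1) 2 "1.prems" by (simp add: dvd_diff_nat)
    ultimately show ?thesis using 2 by (simp add: euclid_tiling_wide)
  next
    case 3
    then have "g \<le> W" using "1.prems" by (simp add: dvd_imp_le)
    moreover have "length (euclid_tiling x (y + W) W (H - W)) * g \<le> W + (H - W)"
      using "1.IH"(2) 3 "1.prems" by (simp add: dvd_diff_nat)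
    ultimately show ?thesis using 3 by (simp add: euclid_tiling_tall)
  qed
qed

section \<open>The pinwheel construction\<close>

text \<open>Symbols at most \<open>2w\<close> stay below those of the squares added by the next pinwheel step;
  sides at most \<open>w\<close> stay nonzero modulo the final height \<open>p = w + 8\<close>.\<close>

definition good_tiling :: "square list \<Rightarrow> nat \<Rightarrow> nat \<Rightarrow> bool" where
  "good_tiling L w h \<longleftrightarrow> corner_balanced L 0 0 w h \<and> distinct (map square_symbol L) \<and>
     (\<forall>q\<in>set L. 0 < square_side q \<and> square_side q \<le> w \<and> square_symbol q \<le> 2 * w)"

text \<open>The \<open>w \<times> (w + 16m)\<close> rectangle of \<open>L\<close> stays in the bottom-left corner of a
  \<open>W \<times> (W + 8m)\<close> rectangle, \<open>W = 2w + (12 + d) m\<close>; three squares wind around it, and the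
  remaining \<open>(4 + d) m \<times> (4 - d) m\<close> hole is tiled by the Euclidean algorithm.\<close>

definition pinwheel_step :: "square list \<Rightarrow> nat \<Rightarrow> nat \<Rightarrow> nat \<Rightarrow> square list" where
  "pinwheel_step L w m d = L @
     [(w, 0, w + (12 + d) * m), (0, w + 16 * m, w + (4 + d) * m),
      (w + (4 + d) * m, w + (12 + d) * m, w + 8 * m)] @
     euclid_tiling w (w + (12 + d) * m) ((4 + d) * m) ((4 - d) * m)"

lemma pinwheel_step_symbols:
  assumes "q \<in> set (pinwheel_step L w m d)" and "d \<le> 4"
  shows "q \<in> set L \<or> square_symbol q = 2 * w + (12 + d) * m \<or> square_symbol q = 2 * w + (20 + d) * m \<or>
    square_symbol q = 3 * w + (24 + 2 * d) * m \<or>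
    (2 * w + (12 + d) * m < square_symbol q \<and> square_symbol q < 2 * w + (20 + d) * m \<and>
     square_symbol q mod m = (2 * w + (12 + d) * m) mod m)"
proof -
  let ?M = "euclid_tiling w (w + (12 + d) * m) ((4 + d) * m) ((4 - d) * m)"
  have "square_symbol q mod m = (2 * w + (12 + d) * m) mod m" if "q \<in> set ?M"
    using euclid_tiling_symbol_mod[OF _ _ that, of m] by (simp add: algebra_simps)
  moreover have "2 * w + (12 + d) * m < square_symbol q \<and> square_symbol q < 2 * w + (20 + d) * m"
    if "q \<in> set ?M"
    using euclid_tiling_square_bounds[OF that] assms(2) by (simp add: algebra_simps)
  ultimately show ?thesis
    using assms(1) by (auto simp: pinwheel_step_def algebra_simps)
qed

lemma length_pinwheel_step:
  assumes "0 < m" "d < 4"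
  shows "length (pinwheel_step L w m d) \<le> length L + 11"
proof -
  have "length (euclid_tiling w (w + (12 + d) * m) ((4 + d) * m) ((4 - d) * m)) * m \<le> 8 * m"
    using length_euclid_tiling[of m "(4 + d) * m" "(4 - d) * m" w "w + (12 + d) * m"] assms
    by (simp add: algebra_simps)
  then show ?thesis
    using assms(1) by (simp add: pinwheel_step_def)
qed

lemma good_tiling_pinwheel_step:
  assumes L: "good_tiling L w (w + 16 * m)" and "0 < m" "d < 4"
  shows "good_tiling (pinwheel_step L w m d) (2 * w + (12 + d) * m) (2 * w + (20 + d) * m)"
proof -
  define W where "W = 2 * w + (12 + d) * m"
  define H where "H = 2 * w + (20 + d) * m"
  define b where "b = w + (12 + d) * m"
  define c where "c = w + (4 + d) * m"
  define M where "M = euclid_tiling w b ((4 + d) * m) ((4 - d) * m)"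
  have step: "pinwheel_step L w m d = L @ [(w, 0, b)] @ [(0, w + 16 * m, c)] @ [(c, b, w + 8 * m)] @ M"
    by (simp add: pinwheel_step_def b_def c_def M_def)
  have "corner_balanced (pinwheel_step L w m d) 0 0 W H"
    unfolding step
  proof (rule corner_balanced_pinwheel)
    show "corner_balanced L 0 0 w (w + 16 * m)" using L by (simp add: good_tiling_def)
    show "corner_balanced [(w, 0, b)] w 0 W b"
      using corner_balanced_square[of w 0 b] by (simp add: W_def b_def algebra_simps)
    show "corner_balanced [(0, w + 16 * m, c)] 0 (w + 16 * m) c H"
      using corner_balanced_square[of 0 "w + 16 * m" c] by (simp add: H_def c_def algebra_simps)
    show "corner_balanced [(c, b, w + 8 * m)] c b W H"
      using corner_balanced_square[of c b "w + 8 * m"] by (simp add: W_def H_def b_def c_def algebra_simps)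
    show "corner_balanced M w b c (w + 16 * m)"
      using corner_balanced_euclid_tiling[of w b "(4 + d) * m" "(4 - d) * m"] \<open>d < 4\<close>
      by (simp add: M_def b_def c_def algebra_simps)
  qed
  moreover have "distinct (map square_symbol (pinwheel_step L w m d))"
  proof -
    have "square_symbol q < W" if "q \<in> set L" for q
    proof -
      have "square_symbol q \<le> 2 * w" using L that by (simp add: good_tiling_def)
      moreover have "0 < (12 + d) * m" using \<open>0 < m\<close> by simp
      ultimately show ?thesis unfolding W_def by linarith
    qed
    moreover have "W < square_symbol q \<and> square_symbol q < H" if "q \<in> set M" for q
      using euclid_tiling_square_bounds[OF that[unfolded M_def]] \<open>d < 4\<close>
      by (simp add: W_def H_def b_def algebra_simps)
    moreover have "W < H" "0 < c" using \<open>0 < m\<close> by (simp_all add: W_def H_def c_def)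
    ultimately show ?thesis
      using L distinct_euclid_tiling_symbols[of w b "(4 + d) * m" "(4 - d) * m"]
      unfolding step
      by (fastforce simp: good_tiling_def M_def W_def H_def b_def c_def algebra_simps)
  qed
  moreover have "0 < square_side q \<and> square_side q \<le> W \<and> square_symbol q \<le> 2 * W"
    if "q \<in> set (pinwheel_step L w m d)" for q
  proof -
    have "q \<in> set L \<or> q \<in> set M \<or> q = (w, 0, b) \<or> q = (0, w + 16 * m, c) \<or> q = (c, b, w + 8 * m)"
      using that by (auto simp: step)
    then show ?thesis
      using L euclid_tiling_square_bounds[of q w b "(4 + d) * m" "(4 - d) * m"] \<open>0 < m\<close> \<open>d < 4\<close>
      by (elim disjE) (auto simp: good_tiling_def M_def W_def b_def c_def algebra_simps)
  qed
  ultimately show ?thesis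
    by (simp add: good_tiling_def W_def H_def)
qed

fun base4_value :: "nat list \<Rightarrow> nat" where
  "base4_value [] = 0"
| "base4_value (d # ds) = d * 4 ^ length ds + base4_value ds"

lemma base4_digits_exist:
  "n < 4 ^ j \<Longrightarrow> \<exists>ds. length ds = j \<and> (\<forall>d\<in>set ds. d < 4) \<and> base4_value ds = n"
proof (induction j arbitrary: n)
  case 0
  then show ?case by simp
next
  case (Suc j)
  obtain ds where ds: "length ds = j" "\<forall>d\<in>set ds. d < 4" "base4_value ds = n mod 4 ^ j"
    using Suc.IH[of "n mod 4 ^ j"] by auto
  have "n div 4 ^ j < 4"
    using Suc.prems by (simp add: div_less_iff_less_mult mult.commute)
  moreover have "n = n div 4 ^ j * 4 ^ j + n mod 4 ^ j"
    by (rule div_mult_mod_eq[symmetric])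
  ultimately show ?case
    using ds by (intro exI[of _ "n div 4 ^ j # ds"]) auto
qed

fun pinwheel_chain :: "nat \<Rightarrow> square list \<Rightarrow> nat \<Rightarrow> nat list \<Rightarrow> square list \<times> nat" where
  "pinwheel_chain e L w [] = (L, w)"
| "pinwheel_chain e L w (d # ds) =
     pinwheel_chain e (pinwheel_step L w (2 ^ (length ds + e)) d)
       (2 * w + (12 + d) * 2 ^ (length ds + e)) ds"

lemma good_tiling_pinwheel_chain:
  assumes "good_tiling L w (w + 8 * 2 ^ (length ds + e))" "\<forall>d\<in>set ds. d < 4"
    "pinwheel_chain e L w ds = (L', w')"
  shows "good_tiling L' w' (w' + 8 * 2 ^ e) \<and>
    w' + 4 * 2 ^ e = 2 ^ length ds * w + 2 ^ e * (4 * 4 ^ length ds + base4_value ds) \<and>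
    length L' \<le> length L + 11 * length ds"
  using assms
proof (induction ds arbitrary: L w)
  case Nil
  then show ?case by simp
next
  case (Cons d ds)
  define m where "m = (2::nat) ^ (length ds + e)"
  have "0 < m" "d < 4" using Cons.prems(2) by (simp_all add: m_def)
  have "good_tiling (pinwheel_step L w m d) (2 * w + (12 + d) * m) (2 * w + (12 + d) * m + 8 * m)"
    using good_tiling_pinwheel_step[of L w m d] Cons.prems(1) \<open>0 < m\<close> \<open>d < 4\<close>
    by (simp add: m_def algebra_simps)
  then have IH: "good_tiling L' w' (w' + 8 * 2 ^ e) \<and>
    w' + 4 * 2 ^ e =
      2 ^ length ds * (2 * w + (12 + d) * m) + 2 ^ e * (4 * 4 ^ length ds + base4_value ds) \<and>
    length L' \<le> length (pinwheel_step L w m d) + 11 * length ds"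
    using Cons.IH[of "pinwheel_step L w m d" "2 * w + (12 + d) * m"] Cons.prems(2,3)
    by (simp add: m_def)
  have "2 ^ length ds * m = 2 ^ e * 4 ^ length ds"
    by (simp add: m_def power_add power_mult_distrib[symmetric] mult_ac)
  then have "w' + 4 * 2 ^ e =
      2 ^ length (d # ds) * w + 2 ^ e * (4 * 4 ^ length (d # ds) + base4_value (d # ds))"
    using IH by (simp add: algebra_simps)
  moreover have "length L' \<le> length L + 11 * length (d # ds)"
    using IH length_pinwheel_step[OF \<open>0 < m\<close> \<open>d < 4\<close>, of L w] by simp
  ultimately show ?case
    using IH by blast
qed

lemma good_tiling_initial:
  assumes "0 < g" "8 \<le> a"
  shows "good_tiling (euclid_tiling 0 0 (a * g) (8 * g) @ [(0, 8 * g, a * g)]) (a * g) (a * g + 8 * g)"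
    and "length (euclid_tiling 0 0 (a * g) (8 * g) @ [(0, 8 * g, a * g)]) \<le> a + 9"
proof -
  let ?E = "euclid_tiling 0 0 (a * g) (8 * g)"
  have bounds: "0 < square_symbol q \<and> square_symbol q < a * g + 8 * g \<and>
      0 < square_side q \<and> square_side q \<le> a * g"
    if "q \<in> set ?E" for q
    using euclid_tiling_square_bounds[OF that] by simp
  have "corner_balanced ?E 0 0 (a * g) (8 * g)"
    using corner_balanced_euclid_tiling[of 0 0 "a * g" "8 * g"] by simp
  moreover have "corner_balanced [(0, 8 * g, a * g)] 0 (8 * g) (a * g) (a * g + 8 * g)"
    using corner_balanced_square[of 0 "8 * g" "a * g"] by (simp add: add.commute)
  ultimately have "corner_balanced (?E @ [(0, 8 * g, a * g)]) 0 0 (a * g) (a * g + 8 * g)"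
    by (rule corner_balanced_append_top)
  moreover have "a * g + 8 * g \<notin> square_symbol ` set ?E"
    using bounds by fastforce
  then have "distinct (map square_symbol (?E @ [(0, 8 * g, a * g)]))"
    using distinct_euclid_tiling_symbols[of 0 0 "a * g" "8 * g"] by (simp add: add.commute)
  moreover have "0 < square_side q \<and> square_side q \<le> a * g \<and> square_symbol q \<le> 2 * (a * g)"
    if q: "q \<in> set (?E @ [(0, 8 * g, a * g)])" for q
  proof -
    have le: "8 * g \<le> a * g" "0 < a * g" using assms by simp_all
    consider "q \<in> set ?E" | "q = (0, 8 * g, a * g)" using q by auto
    then show ?thesis
    proof cases
      case 1
      then show ?thesis using bounds[of q] le(1) by (intro conjI; linarith)
    next
      case 2
      then show ?thesis using le by simp
    qed
  qed
  ultimately show "good_tiling (?E @ [(0, 8 * g, a * g)]) (a * g) (a * g + 8 * g)"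
    unfolding good_tiling_def by blast
  have "length ?E * g \<le> (a + 8) * g"
    using length_euclid_tiling[of g "a * g" "8 * g" 0 0] assms(1) by (simp add: algebra_simps)
  then show "length (?E @ [(0, 8 * g, a * g)]) \<le> a + 9"
    using assms(1) by simp
qed

section \<open>Choosing the parameters\<close>

lemma inj_on_mod_near:
  fixes c p :: nat
  assumes "c < p"
  shows "inj_on (\<lambda>v. v mod p) ({0<..<p} - {c} \<union> {p, p + c})"
proof (rule inj_onI)
  fix u v assume "u \<in> {0<..<p} - {c} \<union> {p, p + c}" "v \<in> {0<..<p} - {c} \<union> {p, p + c}"
    and "u mod p = v mod p"
  with assms show "u = v" by auto
qed

lemma distinct_map_mod:
  fixes f :: "'a \<Rightarrow> nat"
  assumes "distinct (map f xs)" "inj_on (\<lambda>v. v mod p) (f ` set xs)"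
  shows "distinct (map (\<lambda>x. f x mod p) xs)"
proof -
  have "distinct (map (\<lambda>v. v mod p) (map f xs))"
    using assms distinct_map by (metis list.set_map)
  then show ?thesis by (simp add: comp_def)
qed

text \<open>After the last two steps, at scales 2 and 1, every symbol is below \<open>p\<close> except those of the
  last two outer squares, which are \<open>p\<close> and \<open>p + c\<close> with \<open>c = W1 + 4 + d2\<close>. Symbols of squares
  in the hole of the step at scale 2 have the parity of \<open>W1\<close>, and \<open>c\<close> has the other one.\<close>

lemma distinct_symbols_mod_last_steps:
  fixes w d1 d2 :: nat
  defines "W1 \<equiv> 2 * w + (12 + d1) * 2"
  assumes L: "good_tiling L w (w + 32)" and "d1 < 4" "d2 < 4" "odd d2"
  shows "distinct (map (\<lambda>q. square_symbol q mod (2 * W1 + 20 + d2))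
           (pinwheel_step (pinwheel_step L w 2 d1) W1 1 d2))"
proof -
  define p where "p = 2 * W1 + 20 + d2"
  define c where "c = W1 + 4 + d2"
  let ?L2 = "pinwheel_step L w 2 d1"
  let ?L3 = "pinwheel_step ?L2 W1 1 d2"
  have good2: "good_tiling ?L2 W1 (W1 + 16)"
    using good_tiling_pinwheel_step[of L w 2 d1] assms by (simp add: W1_def algebra_simps)
  have good3: "good_tiling ?L3 (2 * W1 + 12 + d2) p"
    using good_tiling_pinwheel_step[of ?L2 W1 1 d2] good2 assms by (simp add: p_def algebra_simps)
  have L2_symbols: "0 < square_symbol q \<and> square_symbol q < 2 * W1 + 12 + d2 \<and> square_symbol q \<noteq> c"
    if q: "q \<in> set ?L2" for q
  proof (intro conjI)
    have "0 < square_side q" "square_symbol q \<le> 2 * W1"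
      using good2 q by (auto simp: good_tiling_def)
    then show "0 < square_symbol q" "square_symbol q < 2 * W1 + 12 + d2"
      by (cases q, simp, linarith)
    show "square_symbol q \<noteq> c"
    proof
      assume eq: "square_symbol q = c"
      have "square_symbol q \<le> 2 * w" if "q \<in> set L"
        using L that by (simp add: good_tiling_def)
      moreover have "c mod 2 \<noteq> W1 mod 2"
        using \<open>odd d2\<close> unfolding c_def by presburger
      ultimately show False
        using pinwheel_step_symbols[OF q] eq \<open>d1 < 4\<close> \<open>d2 < 4\<close>
        by (auto simp: c_def W1_def)
    qed
  qed
  have L3_symbols: "square_symbol q \<in> {0<..<p} - {c} \<union> {p, p + c}"
    if q: "q \<in> set ?L3" for q
  proof -
    consider "q \<in> set ?L2" | "square_symbol q = 2 * W1 + (12 + d2)" | "square_symbol q = p"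
      | "square_symbol q = p + c" | "2 * W1 + (12 + d2) < square_symbol q" "square_symbol q < p"
      using pinwheel_step_symbols[OF q] \<open>d2 < 4\<close> by (auto simp: p_def c_def)
    then show ?thesis
      by cases (use L2_symbols[of q] in \<open>auto simp: p_def c_def\<close>)
  qed
  have "c < p" by (simp add: c_def p_def)
  moreover have "square_symbol ` set ?L3 \<subseteq> {0<..<p} - {c} \<union> {p, p + c}"
    using L3_symbols by blast
  ultimately have "inj_on (\<lambda>v. v mod p) (square_symbol ` set ?L3)"
    by (rule inj_on_subset[OF inj_on_mod_near])
  moreover have "distinct (map square_symbol ?L3)"
    using good3 by (simp add: good_tiling_def)
  ultimately show ?thesis
    unfolding p_def[symmetric] by (rule distinct_map_mod[rotated])
qed

lemma exists_square_trade_large: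
  assumes "2 \<le> k" "8 \<le> a" "E < 4 ^ k" "odd E" "p = (a + 4) * 4 ^ k + E + 4"
  shows "\<exists>L. square_trade p L \<and> length L \<le> a + 9 + 11 * k"
proof -
  obtain j where k: "k = j + 2" using \<open>2 \<le> k\<close> by (metis add.commute le_Suc_ex)
  define g where "g = (2::nat) ^ k"
  define R where "R = euclid_tiling 0 0 (a * g) (8 * g) @ [(0, 8 * g, a * g)]"
  have R: "good_tiling R (a * g) (a * g + 8 * g)" "length R \<le> a + 9"
    using good_tiling_initial[of g a] \<open>8 \<le> a\<close> by (simp_all add: R_def g_def)
  \<comment> \<open>The chain consumes the base-4 digits of \<open>E div 16\<close> at scales \<open>2\<^sup>k\<^sup>-\<^sup>1, \<dots>, 4\<close>;
    the last two digits, at scales 2 and 1, are added explicitly.\<close>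
  have "E div 16 < 4 ^ j"
    using \<open>E < 4 ^ k\<close> by (simp add: k div_less_iff_less_mult power_add mult.commute)
  then obtain ds where ds: "length ds = j" "\<forall>d\<in>set ds. d < 4" "base4_value ds = E div 16"
    using base4_digits_exist by blast
  obtain L1 w1 where chain: "pinwheel_chain 2 R (a * g) ds = (L1, w1)"
    by (cases "pinwheel_chain 2 R (a * g) ds")
  have "good_tiling R (a * g) (a * g + 8 * 2 ^ (length ds + 2))"
    using R(1) by (simp add: ds(1) g_def k)
  then have L1: "good_tiling L1 w1 (w1 + 32)"
    "w1 + 16 = 2 ^ j * (a * g) + 4 * (4 * 4 ^ j + E div 16)"
    "length L1 \<le> length R + 11 * j"
    using good_tiling_pinwheel_chain[OF _ ds(2) chain] ds(1,3) by simp_all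
  define d1 where "d1 = E div 4 mod 4"
  define d2 where "d2 = E mod 4"
  define W1 where "W1 = 2 * w1 + (12 + d1) * 2"
  define L where "L = pinwheel_step (pinwheel_step L1 w1 2 d1) W1 1 d2"
  have "d1 < 4" "d2 < 4" by (simp_all add: d1_def d2_def)
  have "odd d2"
    using \<open>odd E\<close> by (simp add: d2_def odd_iff_mod_2_eq_one mod_mod_cancel[of 2 4 E])
  have "(4::nat) ^ k = 2 ^ j * g * 4"
    by (simp add: g_def k power_add flip: power_mult_distrib)
  moreover have "E = 16 * (E div 16) + 4 * d1 + d2"
    using div_mult_mod_eq[of E 16] mod_mult2_eq[of E 4 4, simplified] unfolding d1_def d2_def by linarith
  ultimately have p: "p = 2 * W1 + 20 + d2"
    using L1(2) \<open>p = (a + 4) * 4 ^ k + E + 4\<close> by (simp add: W1_def k algebra_simps)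
  have good2: "good_tiling (pinwheel_step L1 w1 2 d1) W1 (W1 + 16)"
    using good_tiling_pinwheel_step[of L1 w1 2 d1] L1(1) \<open>d1 < 4\<close> by (simp add: W1_def algebra_simps)
  have good: "good_tiling L (2 * W1 + 12 + d2) p"
    using good_tiling_pinwheel_step[of "pinwheel_step L1 w1 2 d1" W1 1 d2] good2 \<open>d2 < 4\<close>
    by (simp add: L_def p algebra_simps)
  have "square_trade p L"
  proof
    show "1 < p" using p by simp
    show "L \<noteq> []" by (simp add: L_def pinwheel_step_def)
    show "distinct (map (\<lambda>q. square_symbol q mod p) L)"
      unfolding L_def p W1_def
      using distinct_symbols_mod_last_steps[OF L1(1) \<open>d1 < 4\<close> \<open>d2 < 4\<close> \<open>odd d2\<close>] .
    show "\<forall>q\<in>set L. square_side q mod p \<noteq> 0"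
      using good by (auto simp: good_tiling_def p)
    show "image_mset (pair_mod p) (main_corners L) = image_mset (pair_mod p) (anti_corners L)"
      using good by (auto simp: good_tiling_def intro: corner_balanced_mod)
  qed
  moreover have "length L \<le> a + 9 + 11 * k"
    using length_pinwheel_step[of 2 d1 L1 w1] length_pinwheel_step[of 1 d2 "pinwheel_step L1 w1 2 d1" W1]
      \<open>d1 < 4\<close> \<open>d2 < 4\<close> L1(3) R(2) by (simp add: L_def k)
  ultimately show ?thesis by blast
qed

lemma square_trade_strip:
  assumes "2 \<le> p"
  shows "square_trade p (euclid_tiling 0 0 p 1)" and "length (euclid_tiling 0 0 p 1) \<le> p + 1"
proof -
  let ?L = "euclid_tiling 0 0 p 1"
  have bounds: "0 < square_symbol q \<and> square_symbol q \<le> p \<and> square_side q = 1" if "q \<in> set ?L" for q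
    using euclid_tiling_square_bounds[OF that] by simp
  show "square_trade p ?L"
  proof
    show "1 < p" using assms by simp
    show "?L \<noteq> []" using assms by (simp add: euclid_tiling_wide)
    have "square_symbol ` set ?L \<subseteq> {0<..<p} - {0} \<union> {p, p + 0}"
      using bounds by fastforce
    moreover have "0 < p" using assms by simp
    ultimately have "inj_on (\<lambda>v. v mod p) (square_symbol ` set ?L)"
      using inj_on_mod_near inj_on_subset by blast
    then show "distinct (map (\<lambda>q. square_symbol q mod p) ?L)"
      by (rule distinct_map_mod[OF distinct_euclid_tiling_symbols])
    show "\<forall>q\<in>set ?L. square_side q mod p \<noteq> 0"
      using bounds assms by simp
    show "image_mset (pair_mod p) (main_corners ?L) = image_mset (pair_mod p) (anti_corners ?L)"
      using corner_balanced_mod[of ?L p 1 p] corner_balanced_euclid_tiling[of 0 0 p 1] by simp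
  qed
  show "length ?L \<le> p + 1"
    using length_euclid_tiling[of 1 p 1 0 0] by simp
qed

lemma exists_power4_bracket: "12 \<le> (n::nat) \<Longrightarrow> \<exists>k. 12 * 4 ^ k \<le> n \<and> n < 48 * 4 ^ k"
proof (induction n rule: less_induct)
  case (less n)
  show ?case
  proof (cases "n < 48")
    case True
    then show ?thesis using less.prems by (intro exI[of _ 0]) simp
  next
    case False
    then have "n div 4 < n" "12 \<le> n div 4" by simp_all
    then obtain k where k: "12 * 4 ^ k \<le> n div 4" "n div 4 < 48 * 4 ^ k"
      using less.IH by blast
    have "12 * 4 ^ Suc k \<le> n" using k(1) by simp
    moreover have "n < 48 * 4 ^ Suc k" using k(2) by simp
    ultimately show ?thesis by blast
  qed
qed

lemma odd_base4_decomposition: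
  fixes p :: nat
  assumes "odd p" "196 \<le> p"
  shows "\<exists>k a E. 2 \<le> k \<and> 8 \<le> a \<and> a \<le> 43 \<and> E < 4 ^ k \<and> odd E \<and>
    p = (a + 4) * 4 ^ k + E + 4 \<and> 4 ^ k \<le> p"
proof -
  have "12 \<le> p - 4" using assms(2) by simp
  then obtain k where k: "12 * 4 ^ k \<le> p - 4" "p - 4 < 48 * 4 ^ k"
    using exists_power4_bracket by blast
  have "2 \<le> k"
  proof (rule ccontr)
    assume "\<not> 2 \<le> k"
    then have "(4::nat) ^ k \<le> 4 ^ 1" by (intro power_increasing) auto
    then show False using k(2) assms(2) by simp
  qed
  define q where "q = (p - 4) div 4 ^ k"
  define E where "E = (p - 4) mod 4 ^ k"
  have "12 \<le> q"
    using div_le_mono[OF k(1), of "4 ^ k"] by (simp add: q_def)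
  have "q < 48"
    using k(2) by (simp add: q_def less_mult_imp_div_less)
  have p: "p = q * 4 ^ k + E + 4"
    using div_mult_mod_eq[of "p - 4" "4 ^ k"] assms(2) by (simp add: q_def E_def)
  have "(2::nat) dvd 4 ^ k"
    using \<open>2 \<le> k\<close> dvd_trans[of 2 4 "4 ^ k"] by (simp add: dvd_power)
  moreover have "odd (p - 4)"
    using assms by simp
  ultimately have "odd E"
    by (simp add: E_def dvd_mod_iff)
  moreover have "E < 4 ^ k" by (simp add: E_def)
  moreover have "4 ^ k \<le> p" using k(1) by simp
  moreover have "8 \<le> q - 4" "q - 4 \<le> 43" "p = (q - 4 + 4) * 4 ^ k + E + 4"
    using \<open>12 \<le> q\<close> \<open>q < 48\<close> p by simp_all
  ultimately show ?thesis
    using \<open>2 \<le> k\<close> by blast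
qed

lemma nat_le_ln_if_power4_le: "4 ^ k \<le> n \<Longrightarrow> real k \<le> ln (real n)"
proof -
  assume "4 ^ k \<le> n"
  have "1 \<le> ln (4::real)"
    using exp_le by (subst ln_ge_iff) auto
  then have "real k \<le> real k * ln 4"
    by (simp add: mult_le_cancel_left1)
  also have "\<dots> = ln (real (4 ^ k))"
    by (simp add: ln_realpow)
  also have "\<dots> \<le> ln (real n)"
  proof (subst ln_le_cancel_iff)
    have "(0::nat) < 4 ^ k" by simp
    then show "0 < real (4 ^ k)" "0 < real n" "real (4 ^ k) \<le> real n"
      using \<open>4 ^ k \<le> n\<close> by (simp_all only: of_nat_0_less_iff of_nat_le_iff)
  qed
  finally show ?thesis .
qed

lemma exists_short_square_trade:
  assumes "prime p"
  shows "\<exists>L. square_trade p L \<and> real (length L) \<le> 600 * ln (real p)"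
proof (cases "p < 196")
  case True
  have "2 \<le> p" using prime_ge_2_nat[OF assms] .
  have "1 / 2 \<le> ln (2::real)"
    using exp_half_le2 by (subst ln_ge_iff) auto
  also have "\<dots> \<le> ln (real p)"
    using \<open>2 \<le> p\<close> by simp
  finally have "real (length (euclid_tiling 0 0 p 1)) \<le> 600 * ln (real p)"
    using square_trade_strip(2)[OF \<open>2 \<le> p\<close>] True by linarith
  then show ?thesis
    using square_trade_strip(1)[OF \<open>2 \<le> p\<close>] by blast
next
  case False
  then have "odd p" using prime_odd_nat[OF assms] by simp
  then obtain k a E where "2 \<le> k" "8 \<le> a" "a \<le> 43" "E < 4 ^ k" "odd E"
    "p = (a + 4) * 4 ^ k + E + 4" and pk: "4 ^ k \<le> p"
    using odd_base4_decomposition False by (metis not_less)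
  then obtain L where L: "square_trade p L" "length L \<le> a + 9 + 11 * k"
    using exists_square_trade_large by blast
  have "1 \<le> ln (real p)"
    using exp_le False by (subst ln_ge_iff) auto
  then have "real (length L) \<le> 600 * ln (real p)"
    using L(2) \<open>a \<le> 43\<close> nat_le_ln_if_power4_le[OF pk] by linarith
  then show ?thesis
    using L(1) by blast
qed

theorem theorem5p1:
  shows "\<exists>C::real. C > 0 \<and>
    (\<forall>p::nat. prime p \<longrightarrow>
      (\<exists>T. latin_trade p (addtab p) T \<and> real (card T) \<le> C * ln (real p) \<and>
           (\<forall>s<p. sym_count T s = 2 \<or> sym_count T s = 0)))"
proof (intro exI[of _ 1200] conjI allI impI)
  fix p :: nat
  assume "prime p"
  then obtain L where L: "square_trade p L" "real (length L) \<le> 600 * ln (real p)"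
    using exists_short_square_trade by blast
  interpret square_trade p L by (rule L(1))
  show "\<exists>T. latin_trade p (addtab p) T \<and> real (card T) \<le> 1200 * ln (real p) \<and>
      (\<forall>s<p. sym_count T s = 2 \<or> sym_count T s = 0)"
    using latin_trade_squares_trade card_squares_trade sym_count_squares_trade L(2)
    by (intro exI[of _ "squares_trade p L"]) auto
qed simp

end
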